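(* The rules $\mathrm{MC}$, $\mathrm{MCC}$, $\mathrm{RA}$ and $\mathrm{FULL}_H$ are agenda separable: for each such rule $R$, every agenda $\mathcal{A}$, every independent partition $\{\mathcal{A}_1,\mathcal{A}_2\}$ of $\mathcal{A}$ and every profile $P\in\mathcal{J}_{\mathcal{A}}^n$, $R(P)=\{J^1\cup J^2 \mid J^1\in R(P\downarrow\mathcal{A}_1),\ J^2\in R(P\downarrow\mathcal{A}_2)\}$.
   Context: Fix a propositional language, a consistent formula $\Gamma$ (the integrity constraint) and a number $n\ge1$ of agents. An issue is a pair $\{\varphi,\neg\varphi\}$ with $\varphi$ neither a tautology nor a contradiction. An agenda $\mathcal{A}$ is a finite set of issues; a sub-agenda is a union of some issues of $\mathcal{A}$. A set $S$ of formulas is consistent if $S\cup\{\Gamma\}$ is satisfiable. A judgment set over $\mathcal{A}$ is a subset $J\subseteq\mathcal{A}$; it is complete if it contains $\varphi$ or $\neg\varphi$ for each issue. $\mathcal{J}_{\mathcal{A}}$ is the set of complete consistent judgment sets over $\mathcal{A}$ (likewise for sub-agendas, same $\Gamma$). A profile is $P=\langle J_1,\dots,J_n\rangle\in\mathcal{J}_{\mathcal{A}}^n$; $P\downarrow\mathcal{A}'=\langle J_1\cap\mathcal{A}',\dots,J_n\cap\mathcal{A}'\rangle$. $N(P,\varphi)=|\{i:\varphi\in J_i\}|$; $m(P)=\{\varphi\in\mathcal{A}: N(P,\varphi)>n/2\}$; $P$ is majority-consistent if $m(P)$ is consistent. $d_H(J,J')=|J\setminus J'|$, and for profiles $P=\langle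 J_i\rangle$, $Q=\langle J'_i\rangle$, $D_H(P,Q)=\sum_i d_H(J_i,J'_i)$. A partition $\{\mathcal{A}_1,\mathcal{A}_2\}$ of $\mathcal{A}$ into sub-agendas is independent if for all $J^1\in\mathcal{J}_{\mathcal{A}_1}$, $J^2\in\mathcal{J}_{\mathcal{A}_2}$, $J^1\cup J^2$ is consistent. Rules: $\mathrm{MC}(P)$ is the set of $J\in\mathcal{J}_{\mathcal{A}}$ with $J\supseteq S$ for some inclusion-maximal consistent subset $S$ of $m(P)$. $\mathrm{MCC}(P)$ is the set of $J\in\mathcal{J}_{\mathcal{A}}$ with $J\supseteq S$ for some consistent subset $S$ of $m(P)$ of maximum cardinality. $\mathrm{RA}$ (ranked agenda): writing $\mathcal{A}=\{\psi_1,\dots,\psi_{2m}\}$, for each permutation $\sigma$ such that $N(P,\psi_{\sigma(1)})\ge\dots\ge N(P,\psi_{\sigma(2m)})$, let $J_\sigma$ be obtained by starting from $S=\emptyset$ and, for $j=1,\dots,2m$, adding $\psi_{\sigma(j)}$ to $S$ if $S\cup\{\psi_{\sigma(j)}\}$ is consistent; $\mathrm{RA}(P)$ is the set of all such $J_\sigma$. $\mathrm{FULL}_H(P)$ is the set of $J\in\mathcal{J}_{\mathcal{A}}$ with $J\supseteq m(Q)$ for some majority-consistent profile $Q\in\mathcal{J}_{\mathcal{A}}^n$ minimizing $D_H(P,Q)$ among majority-consistent profiles. *)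

theory Defs
  imports Main
begin

datatype 'v form =
    Atom 'v
  | FFalse
  | Neg "'v form"
  | Conj "'v form" "'v form"
  | Disj "'v form" "'v form"
  | Imp "'v form" "'v form"

fun holds :: "('v \<Rightarrow> bool) \<Rightarrow> 'v form \<Rightarrow> bool" where
  "holds v (Atom a) = v a"
| "holds v FFalse = False"
| "holds v (Neg \<phi>) = (\<not> holds v \<phi>)"
| "holds v (Conj \<phi> \<psi>) = (holds v \<phi> \<and> holds v \<psi>)"
| "holds v (Disj \<phi> \<psi>) = (holds v \<phi> \<or> holds v \<psi>)"
| "holds v (Imp \<phi> \<psi>) = (holds v \<phi> \<longrightarrow> holds v \<psi>)"

definition tautology :: "'v form \<Rightarrow> bool" where
  "tautology \<phi> \<longleftrightarrow> (\<forall>v. holds v \<phi>)"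

definition contradiction :: "'v form \<Rightarrow> bool" where
  "contradiction \<phi> \<longleftrightarrow> (\<forall>v. \<not> holds v \<phi>)"

text \<open>A set of formulas is consistent if together with the integrity constraint it is satisfiable.\<close>
definition consistent :: "'v form \<Rightarrow> 'v form set \<Rightarrow> bool" where
  "consistent \<Gamma> S \<longleftrightarrow> (\<exists>v. holds v \<Gamma> \<and> (\<forall>\<phi>\<in>S. holds v \<phi>))"

definition issue :: "'v form set \<Rightarrow> bool" where
  "issue I \<longleftrightarrow> (\<exists>\<phi>. I = {\<phi>, Neg \<phi>} \<and> \<not> tautology \<phi> \<and> \<not> contradiction \<phi>)"

definition agenda :: "'v form set set \<Rightarrow> bool" where
  "agenda Ag \<longleftrightarrow> finite Ag \<and> (\<forall>I\<in>Ag. issue I)"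

definition complete :: "'v form set set \<Rightarrow> 'v form set \<Rightarrow> bool" where
  "complete Ag J \<longleftrightarrow> (\<forall>\<phi>. {\<phi>, Neg \<phi>} \<in> Ag \<longrightarrow> \<phi> \<in> J \<or> Neg \<phi> \<in> J)"

definition JS :: "'v form \<Rightarrow> 'v form set set \<Rightarrow> 'v form set set" where
  "JS \<Gamma> Ag = {J. J \<subseteq> \<Union>Ag \<and> complete Ag J \<and> consistent \<Gamma> J}"

definition profiles :: "'v form \<Rightarrow> 'v form set set \<Rightarrow> nat \<Rightarrow> 'v form set list set" where
  "profiles \<Gamma> Ag n = {P. length P = n \<and> set P \<subseteq> JS \<Gamma> Ag}"

definition restr :: "'v form set list \<Rightarrow> 'v form set set \<Rightarrow> 'v form set list" where
  "restr P Ag' = map (\<lambda>J. J \<inter> \<Union>Ag') P"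

definition support :: "'v form set list \<Rightarrow> 'v form \<Rightarrow> nat" where
  "support P \<phi> = length (filter (\<lambda>J. \<phi> \<in> J) P)"

definition maj :: "'v form set set \<Rightarrow> 'v form set list \<Rightarrow> 'v form set" where
  "maj Ag P = {\<phi> \<in> \<Union>Ag. length P < 2 * support P \<phi>}"

definition dH :: "'v form set \<Rightarrow> 'v form set \<Rightarrow> nat" where
  "dH J J' = card (J - J')"

definition DH :: "'v form set list \<Rightarrow> 'v form set list \<Rightarrow> nat" where
  "DH P Q = sum_list (map (\<lambda>(J, J'). dH J J') (zip P Q))"

definition independent_partition ::
  "'v form \<Rightarrow> 'v form set set \<Rightarrow> 'v form set set \<Rightarrow> 'v form set set \<Rightarrow> bool" where
  "independent_partition \<Gamma> Ag Ag1 Ag2 \<longleftrightarrow>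
     Ag1 \<subseteq> Ag \<and> Ag2 \<subseteq> Ag \<and> Ag1 \<union> Ag2 = Ag \<and>
     \<Union>Ag1 \<inter> \<Union>Ag2 = {} \<and> Ag1 \<noteq> {} \<and> Ag2 \<noteq> {} \<and>
     (\<forall>J1 \<in> JS \<Gamma> Ag1. \<forall>J2 \<in> JS \<Gamma> Ag2. consistent \<Gamma> (J1 \<union> J2))"

definition MC :: "'v form \<Rightarrow> 'v form set set \<Rightarrow> 'v form set list \<Rightarrow> 'v form set set" where
  "MC \<Gamma> Ag P = {J \<in> JS \<Gamma> Ag. \<exists>S. S \<subseteq> maj Ag P \<and> consistent \<Gamma> S \<and>
      (\<forall>S'. S \<subseteq> S' \<and> S' \<subseteq> maj Ag P \<and> consistent \<Gamma> S' \<longrightarrow> S' = S) \<and> S \<subseteq> J}"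

definition MCC :: "'v form \<Rightarrow> 'v form set set \<Rightarrow> 'v form set list \<Rightarrow> 'v form set set" where
  "MCC \<Gamma> Ag P = {J \<in> JS \<Gamma> Ag. \<exists>S. S \<subseteq> maj Ag P \<and> consistent \<Gamma> S \<and>
      (\<forall>S'. S' \<subseteq> maj Ag P \<and> consistent \<Gamma> S' \<longrightarrow> card S' \<le> card S) \<and> S \<subseteq> J}"

fun greedy :: "'v form \<Rightarrow> 'v form list \<Rightarrow> 'v form set \<Rightarrow> 'v form set" where
  "greedy \<Gamma> [] S = S"
| "greedy \<Gamma> (x # xs) S =
     greedy \<Gamma> xs (if consistent \<Gamma> (insert x S) then insert x S else S)"

definition RA :: "'v form \<Rightarrow> 'v form set set \<Rightarrow> 'v form set list \<Rightarrow> 'v form set set" where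
  "RA \<Gamma> Ag P = {greedy \<Gamma> xs {} | xs. distinct xs \<and> set xs = \<Union>Ag \<and>
      sorted_wrt (\<lambda>a b. support P b \<le> support P a) xs}"

definition FULL_H :: "'v form \<Rightarrow> 'v form set set \<Rightarrow> 'v form set list \<Rightarrow> 'v form set set" where
  "FULL_H \<Gamma> Ag P = {J \<in> JS \<Gamma> Ag. \<exists>Q. Q \<in> profiles \<Gamma> Ag (length P) \<and> consistent \<Gamma> (maj Ag Q) \<and>
      (\<forall>Q'. Q' \<in> profiles \<Gamma> Ag (length P) \<and> consistent \<Gamma> (maj Ag Q') \<longrightarrow> DH P Q \<le> DH P Q') \<and>
      maj Ag Q \<subseteq> J}"

end

theory Submission
  imports Defs
begin

text \<open>
  For an independent partition, consistency of a set of agenda formulas is decided separately on the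
  two sub-agendas. Every notion the four rules optimise is built from consistency and from
  quantities that add up over the two parts (majority membership, cardinality, support, Hamming
  distance), so each optimum over the whole agenda is exactly a union of optima over the parts:
  maximal and maximum-cardinality consistent subsets of the majority split componentwise, the greedy
  construction of the ranked agenda runs independently on the two interleaved subsequences of a
  ranking, and a closest majority-consistent profile is glued from closest ones on the parts.
\<close>

definition pair_unions :: "'a set set \<Rightarrow> 'a set set \<Rightarrow> 'a set set" where
  "pair_unions A B = {a \<union> b | a b. a \<in> A \<and> b \<in> B}"

lemma pair_unionsI: "a \<in> A \<Longrightarrow> b \<in> B \<Longrightarrow> a \<union> b \<in> pair_unions A B"
  by (auto simp: pair_unions_def)

lemma pair_unionsE:
  assumes "S \<in> pair_unions A B"
  obtains a b where "S = a \<union> b" "a \<in> A" "b \<in> B"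
  using assms by (auto simp: pair_unions_def)

lemma mem_pair_unions_iff:
  assumes "X1 \<inter> X2 = {}" "A \<subseteq> Pow X1" "B \<subseteq> Pow X2"
  shows "S \<in> pair_unions A B \<longleftrightarrow> S \<subseteq> X1 \<union> X2 \<and> S \<inter> X1 \<in> A \<and> S \<inter> X2 \<in> B"
proof
  assume "S \<in> pair_unions A B"
  then obtain a b where S: "S = a \<union> b" and ab: "a \<in> A" "b \<in> B"
    by (auto simp: pair_unions_def)
  moreover have "a \<subseteq> X1" "b \<subseteq> X2" using ab assms(2,3) by auto
  ultimately have "S \<inter> X1 = a" "S \<inter> X2 = b" "S \<subseteq> X1 \<union> X2" using assms(1) by auto
  with ab show "S \<subseteq> X1 \<union> X2 \<and> S \<inter> X1 \<in> A \<and> S \<inter> X2 \<in> B" by simp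
next
  assume S: "S \<subseteq> X1 \<union> X2 \<and> S \<inter> X1 \<in> A \<and> S \<inter> X2 \<in> B"
  then have "S = S \<inter> X1 \<union> S \<inter> X2" by blast
  with S show "S \<in> pair_unions A B" unfolding pair_unions_def by blast
qed

lemma ex_subset_pair_unions_iff:
  assumes "A \<subseteq> Pow X1" "B \<subseteq> Pow X2"
  shows "(\<exists>S\<in>pair_unions A B. S \<subseteq> J) \<longleftrightarrow> (\<exists>a\<in>A. a \<subseteq> J \<inter> X1) \<and> (\<exists>b\<in>B. b \<subseteq> J \<inter> X2)"
proof
  assume "\<exists>S\<in>pair_unions A B. S \<subseteq> J"
  then obtain a b where ab: "a \<in> A" "b \<in> B" "a \<union> b \<subseteq> J" unfolding pair_unions_def by blast
  moreover have "a \<subseteq> X1" "b \<subseteq> X2" using ab(1,2) assms by auto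
  ultimately show "(\<exists>a\<in>A. a \<subseteq> J \<inter> X1) \<and> (\<exists>b\<in>B. b \<subseteq> J \<inter> X2)" by auto
next
  assume "(\<exists>a\<in>A. a \<subseteq> J \<inter> X1) \<and> (\<exists>b\<in>B. b \<subseteq> J \<inter> X2)"
  then show "\<exists>S\<in>pair_unions A B. S \<subseteq> J" unfolding pair_unions_def by auto
qed

lemma card_Int_split:
  assumes "finite S" "S \<subseteq> X1 \<union> X2" "X1 \<inter> X2 = {}"
  shows "card S = card (S \<inter> X1) + card (S \<inter> X2)"
proof -
  have "card (S \<inter> X1 \<union> S \<inter> X2) = card (S \<inter> X1) + card (S \<inter> X2)"
    using assms(1,3) by (intro card_Un_disjoint) auto
  moreover have "S \<inter> X1 \<union> S \<inter> X2 = S" using assms(2) by blast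
  ultimately show ?thesis by simp
qed

section \<open>Optimal subsets under a separable constraint\<close>

definition maximal_subsets :: "('a set \<Rightarrow> bool) \<Rightarrow> 'a set \<Rightarrow> 'a set set" where
  "maximal_subsets C M = {S. S \<subseteq> M \<and> C S \<and> (\<forall>S'. S \<subseteq> S' \<and> S' \<subseteq> M \<and> C S' \<longrightarrow> S' = S)}"

definition max_card_subsets :: "('a set \<Rightarrow> bool) \<Rightarrow> 'a set \<Rightarrow> 'a set set" where
  "max_card_subsets C M = {S. S \<subseteq> M \<and> C S \<and> (\<forall>S'. S' \<subseteq> M \<and> C S' \<longrightarrow> card S' \<le> card S)}"

lemma maximal_subsetsD:
  assumes "S \<in> maximal_subsets C M"
  shows "S \<subseteq> M" "C S" "S \<subseteq> T \<Longrightarrow> T \<subseteq> M \<Longrightarrow> C T \<Longrightarrow> T = S"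
  using assms by (auto simp: maximal_subsets_def)

lemma max_card_subsetsD:
  assumes "S \<in> max_card_subsets C M"
  shows "S \<subseteq> M" "C S" "T \<subseteq> M \<Longrightarrow> C T \<Longrightarrow> card T \<le> card S"
  using assms by (auto simp: max_card_subsets_def)

locale separable_constraint =
  fixes C :: "'a set \<Rightarrow> bool" and X1 X2 :: "'a set"
  assumes disjoint: "X1 \<inter> X2 = {}"
    and split: "S \<subseteq> X1 \<union> X2 \<Longrightarrow> C S \<longleftrightarrow> C (S \<inter> X1) \<and> C (S \<inter> X2)"
begin

lemma separable_constraint_swap: "separable_constraint C X2 X1"
  using disjoint split by unfold_locales auto

lemma union_iff:
  assumes "S1 \<subseteq> X1" "S2 \<subseteq> X2"
  shows "C (S1 \<union> S2) \<longleftrightarrow> C S1 \<and> C S2"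
proof -
  have "(S1 \<union> S2) \<inter> X1 = S1" "(S1 \<union> S2) \<inter> X2 = S2" using assms disjoint by auto
  then show ?thesis using split[of "S1 \<union> S2"] assms by auto
qed

context
  fixes M1 M2 :: "'a set"
  assumes M1: "M1 \<subseteq> X1" and M2: "M2 \<subseteq> X2"
begin

lemma parts_of_subset:
  assumes "S \<subseteq> M1 \<union> M2"
  shows "S \<inter> X1 \<subseteq> M1" "S \<inter> X2 \<subseteq> M2" "S = S \<inter> X1 \<union> S \<inter> X2"
    "C S \<longleftrightarrow> C (S \<inter> X1) \<and> C (S \<inter> X2)"
proof -
  show "S \<inter> X1 \<subseteq> M1" "S \<inter> X2 \<subseteq> M2" "S = S \<inter> X1 \<union> S \<inter> X2"
    using assms M1 M2 disjoint by blast+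
  show "C S \<longleftrightarrow> C (S \<inter> X1) \<and> C (S \<inter> X2)" using assms M1 M2 by (intro split) blast
qed

lemma maximal_subset_restrict:
  assumes S: "S \<in> maximal_subsets C (M1 \<union> M2)"
  shows "S \<inter> X1 \<in> maximal_subsets C M1"
proof -
  note SM = maximal_subsetsD(1)[OF S] and parts = parts_of_subset[OF SM]
  have C12: "C (S \<inter> X1)" "C (S \<inter> X2)" using parts(4) maximal_subsetsD(2)[OF S] by auto
  have "S' = S \<inter> X1" if S': "S \<inter> X1 \<subseteq> S'" "S' \<subseteq> M1" "C S'" for S'
  proof -
    have "S \<subseteq> S' \<union> S \<inter> X2" "S' \<union> S \<inter> X2 \<subseteq> M1 \<union> M2"
      using parts(2,3) S'(1,2) by blast+
    moreover have "C (S' \<union> S \<inter> X2)" using union_iff[of S' "S \<inter> X2"] S'(2,3) C12(2) M1 by blast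
    ultimately have "S' \<union> S \<inter> X2 = S" by (rule maximal_subsetsD(3)[OF S])
    then show ?thesis using S'(2) M1 disjoint by blast
  qed
  then show ?thesis using parts(1) C12 by (auto simp: maximal_subsets_def)
qed

lemma max_card_subset_restrict:
  assumes fin: "finite (M1 \<union> M2)" and S: "S \<in> max_card_subsets C (M1 \<union> M2)"
  shows "S \<inter> X1 \<in> max_card_subsets C M1"
proof -
  note SM = max_card_subsetsD(1)[OF S] and parts = parts_of_subset[OF SM]
  have C12: "C (S \<inter> X1)" "C (S \<inter> X2)" using parts(4) max_card_subsetsD(2)[OF S] by auto
  have "card S' \<le> card (S \<inter> X1)" if S': "S' \<subseteq> M1" "C S'" for S'
  proof -
    have "C (S' \<union> S \<inter> X2)" using union_iff[of S' "S \<inter> X2"] S' C12(2) M1 by blast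
    moreover have "S' \<union> S \<inter> X2 \<subseteq> M1 \<union> M2" using parts(2) S'(1) by blast
    ultimately have "card (S' \<union> S \<inter> X2) \<le> card S" by (rule max_card_subsetsD(3)[OF S, rotated])
    moreover have "card (S' \<union> S \<inter> X2) = card S' + card (S \<inter> X2)"
    proof (rule card_Un_disjoint)
      show "finite S'" using S'(1) fin by (rule finite_subset[OF le_supI1])
      show "finite (S \<inter> X2)" using SM fin by (rule finite_subset[OF le_infI1])
      show "S' \<inter> (S \<inter> X2) = {}" using S'(1) M1 disjoint by blast
    qed
    moreover have "card S = card (S \<inter> X1) + card (S \<inter> X2)"
      using card_Int_split[OF finite_subset[OF SM fin] _ disjoint] SM M1 M2 by blast
    ultimately show ?thesis by simp
  qed
  then show ?thesis using parts(1) C12 by (auto simp: max_card_subsets_def)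
qed

end

lemma maximal_subsets_union:
  assumes M1: "M1 \<subseteq> X1" and M2: "M2 \<subseteq> X2"
  shows "maximal_subsets C (M1 \<union> M2) = pair_unions (maximal_subsets C M1) (maximal_subsets C M2)"
proof (rule set_eqI)
  fix S
  have fam: "maximal_subsets C M1 \<subseteq> Pow X1" "maximal_subsets C M2 \<subseteq> Pow X2"
    unfolding maximal_subsets_def using M1 M2 by auto
  have "S \<in> maximal_subsets C (M1 \<union> M2) \<longleftrightarrow>
      S \<subseteq> X1 \<union> X2 \<and> S \<inter> X1 \<in> maximal_subsets C M1 \<and> S \<inter> X2 \<in> maximal_subsets C M2"
  proof (intro iffI conjI)
    assume S: "S \<in> maximal_subsets C (M1 \<union> M2)"
    show "S \<subseteq> X1 \<union> X2" using maximal_subsetsD(1)[OF S] M1 M2 by blast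
    show "S \<inter> X1 \<in> maximal_subsets C M1" by (rule maximal_subset_restrict[OF M1 M2 S])
    show "S \<inter> X2 \<in> maximal_subsets C M2"
      using separable_constraint.maximal_subset_restrict[OF separable_constraint_swap M2 M1] S
      by (simp add: Un_commute)
  next
    assume "S \<subseteq> X1 \<union> X2 \<and> S \<inter> X1 \<in> maximal_subsets C M1 \<and> S \<inter> X2 \<in> maximal_subsets C M2"
    then have S1: "S \<inter> X1 \<in> maximal_subsets C M1" and S2: "S \<inter> X2 \<in> maximal_subsets C M2"
      and SX: "S \<subseteq> X1 \<union> X2"
      by blast+
    have SM: "S \<subseteq> M1 \<union> M2" using SX maximal_subsetsD(1)[OF S1] maximal_subsetsD(1)[OF S2] by blast
    note parts = parts_of_subset[OF M1 M2 SM]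
    have "S' = S" if S': "S \<subseteq> S'" "S' \<subseteq> M1 \<union> M2" "C S'" for S'
    proof -
      note parts' = parts_of_subset[OF M1 M2 S'(2)]
      have C12: "C (S' \<inter> X1)" "C (S' \<inter> X2)" using parts'(4) S'(3) by blast+
      have "S' \<inter> X1 = S \<inter> X1"
        using S'(1) parts'(1) C12(1) by (intro maximal_subsetsD(3)[OF S1]) auto
      moreover have "S' \<inter> X2 = S \<inter> X2"
        using S'(1) parts'(2) C12(2) by (intro maximal_subsetsD(3)[OF S2]) auto
      ultimately show ?thesis using parts(3) parts'(3) by blast
    qed
    then show "S \<in> maximal_subsets C (M1 \<union> M2)"
      using SM parts(4) maximal_subsetsD(2)[OF S1] maximal_subsetsD(2)[OF S2]
      by (auto simp: maximal_subsets_def)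
  qed
  then show "S \<in> maximal_subsets C (M1 \<union> M2) \<longleftrightarrow>
      S \<in> pair_unions (maximal_subsets C M1) (maximal_subsets C M2)"
    by (simp add: mem_pair_unions_iff[OF disjoint fam])
qed

lemma max_card_subsets_union:
  assumes M1: "M1 \<subseteq> X1" and M2: "M2 \<subseteq> X2" and fin: "finite (M1 \<union> M2)"
  shows "max_card_subsets C (M1 \<union> M2) = pair_unions (max_card_subsets C M1) (max_card_subsets C M2)"
proof (rule set_eqI)
  fix S
  have fam: "max_card_subsets C M1 \<subseteq> Pow X1" "max_card_subsets C M2 \<subseteq> Pow X2"
    unfolding max_card_subsets_def using M1 M2 by auto
  have card_parts: "card T = card (T \<inter> X1) + card (T \<inter> X2)" if "T \<subseteq> M1 \<union> M2" for T
    using card_Int_split[OF finite_subset[OF that fin] _ disjoint] that M1 M2 by blast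
  have "S \<in> max_card_subsets C (M1 \<union> M2) \<longleftrightarrow>
      S \<subseteq> X1 \<union> X2 \<and> S \<inter> X1 \<in> max_card_subsets C M1 \<and> S \<inter> X2 \<in> max_card_subsets C M2"
  proof (intro iffI conjI)
    assume S: "S \<in> max_card_subsets C (M1 \<union> M2)"
    show "S \<subseteq> X1 \<union> X2" using max_card_subsetsD(1)[OF S] M1 M2 by blast
    show "S \<inter> X1 \<in> max_card_subsets C M1" by (rule max_card_subset_restrict[OF M1 M2 fin S])
    show "S \<inter> X2 \<in> max_card_subsets C M2"
      using separable_constraint.max_card_subset_restrict[OF separable_constraint_swap M2 M1] fin S
      by (simp add: Un_commute)
  next
    assume "S \<subseteq> X1 \<union> X2 \<and> S \<inter> X1 \<in> max_card_subsets C M1 \<and> S \<inter> X2 \<in> max_card_subsets C M2"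
    then have S1: "S \<inter> X1 \<in> max_card_subsets C M1" and S2: "S \<inter> X2 \<in> max_card_subsets C M2"
      and SX: "S \<subseteq> X1 \<union> X2"
      by blast+
    have SM: "S \<subseteq> M1 \<union> M2" using SX max_card_subsetsD(1)[OF S1] max_card_subsetsD(1)[OF S2] by blast
    note parts = parts_of_subset[OF M1 M2 SM]
    have "card S' \<le> card S" if S': "S' \<subseteq> M1 \<union> M2" "C S'" for S'
    proof -
      note parts' = parts_of_subset[OF M1 M2 S'(1)]
      have C12: "C (S' \<inter> X1)" "C (S' \<inter> X2)" using parts'(4) S'(2) by blast+
      have "card (S' \<inter> X1) \<le> card (S \<inter> X1)" "card (S' \<inter> X2) \<le> card (S \<inter> X2)"
        using max_card_subsetsD(3)[OF S1 parts'(1) C12(1)] max_card_subsetsD(3)[OF S2 parts'(2) C12(2)] .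
      then show ?thesis using card_parts[OF S'(1)] card_parts[OF SM] by simp
    qed
    then show "S \<in> max_card_subsets C (M1 \<union> M2)"
      using SM parts(4) max_card_subsetsD(2)[OF S1] max_card_subsetsD(2)[OF S2]
      by (auto simp: max_card_subsets_def)
  qed
  then show "S \<in> max_card_subsets C (M1 \<union> M2) \<longleftrightarrow>
      S \<in> pair_unions (max_card_subsets C M1) (max_card_subsets C M2)"
    by (simp add: mem_pair_unions_iff[OF disjoint fam])
qed

end

section \<open>Rankings and the greedy construction\<close>

definition rankings :: "('a \<Rightarrow> nat) \<Rightarrow> 'a set \<Rightarrow> 'a list set" where
  "rankings f X = {xs. distinct xs \<and> set xs = X \<and> sorted_wrt (\<lambda>a b. f b \<le> f a) xs}"

lemma filter_in_rankings: "xs \<in> rankings f X \<Longrightarrow> filter (\<lambda>x. x \<in> Y) xs \<in> rankings f (X \<inter> Y)"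
  by (auto simp: rankings_def sorted_wrt_filter)

lemma rankings_cong:
  assumes "\<And>x. x \<in> X \<Longrightarrow> f x = g x"
  shows "rankings f X = rankings g X"
proof -
  have "sorted_wrt (\<lambda>a b. f b \<le> f a) xs = sorted_wrt (\<lambda>a b. g b \<le> g a) xs" if "set xs \<subseteq> X" for xs
    using that by (induction xs) (auto simp: assms subset_iff)
  then show ?thesis by (auto simp: rankings_def)
qed

lemma rankings_merge:
  assumes xs1: "xs1 \<in> rankings f X1" and xs2: "xs2 \<in> rankings f X2" and "X1 \<inter> X2 = {}"
  obtains xs where "xs \<in> rankings f (X1 \<union> X2)"
    "filter (\<lambda>x. x \<in> X1) xs = xs1" "filter (\<lambda>x. x \<in> X2) xs = xs2"
proof
  define k where "k x = - int (f x)" for x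
  have sorted_iff: "sorted (map k ys) \<longleftrightarrow> sorted_wrt (\<lambda>a b. f b \<le> f a) ys" for ys
    by (simp add: sorted_map k_def)
  \<comment> \<open>stable sorting of the concatenation interleaves the two rankings without reordering either\<close>
  let ?xs = "sort_key k (xs1 @ xs2)"
  have "filter (\<lambda>x. x \<in> X1) (xs1 @ xs2) = xs1" "filter (\<lambda>x. x \<in> X2) (xs1 @ xs2) = xs2"
    using xs1 xs2 assms(3) by (auto simp: rankings_def filter_id_conv filter_empty_conv)
  then show "filter (\<lambda>x. x \<in> X1) ?xs = xs1" "filter (\<lambda>x. x \<in> X2) ?xs = xs2"
    using xs1 xs2 by (simp_all add: filter_sort sort_key_id_if_sorted sorted_iff rankings_def)
  show "?xs \<in> rankings f (X1 \<union> X2)"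
    using xs1 xs2 assms(3) sorted_iff[of ?xs] by (auto simp: rankings_def)
qed

lemma greedy_step_split:
  assumes "separable_constraint (consistent G) X1 X2"
    and "x \<in> X1" "S1 \<subseteq> X1" "S2 \<subseteq> X2" "consistent G S2"
  shows "(if consistent G (insert x (S1 \<union> S2)) then insert x (S1 \<union> S2) else S1 \<union> S2) =
    (if consistent G (insert x S1) then insert x S1 else S1) \<union> S2"
  using separable_constraint.union_iff[OF assms(1), of "insert x S1" S2] assms(2-5) by auto

lemma greedy_split:
  assumes sep: "separable_constraint (consistent G) X1 X2"
  shows "set xs \<subseteq> X1 \<union> X2 \<Longrightarrow> S1 \<subseteq> X1 \<Longrightarrow> S2 \<subseteq> X2 \<Longrightarrow> consistent G S1 \<Longrightarrow> consistent G S2 \<Longrightarrow>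
    greedy G xs (S1 \<union> S2) =
      greedy G (filter (\<lambda>x. x \<in> X1) xs) S1 \<union> greedy G (filter (\<lambda>x. x \<in> X2) xs) S2"
proof (induction xs arbitrary: S1 S2)
  case (Cons x xs)
  define step where "step S = (if consistent G (insert x S) then insert x S else S)" for S
  have step_consistent: "consistent G (step S)" if "consistent G S" for S
    using that by (simp add: step_def)
  have disjoint: "X1 \<inter> X2 = {}" using sep by (rule separable_constraint.disjoint)
  show ?case
  proof (cases "x \<in> X1")
    case True
    then have "step (S1 \<union> S2) = step S1 \<union> S2"
      using greedy_step_split[OF sep] Cons.prems unfolding step_def by blast
    moreover have "step S1 \<subseteq> X1" using True Cons.prems by (auto simp: step_def)
    ultimately show ?thesis
      using Cons.IH[of "step S1" S2] Cons.prems step_consistent True disjoint by (auto simp: step_def)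
  next
    case False
    then have x: "x \<in> X2" "x \<notin> X1" using Cons.prems(1) by auto
    then have "step (S2 \<union> S1) = step S2 \<union> S1"
      using greedy_step_split[OF separable_constraint.separable_constraint_swap[OF sep]] Cons.prems
      unfolding step_def by blast
    then have "step (S1 \<union> S2) = S1 \<union> step S2" by (simp add: Un_commute)
    moreover have "step S2 \<subseteq> X2" using x Cons.prems by (auto simp: step_def)
    ultimately show ?thesis
      using Cons.IH[of S1 "step S2"] Cons.prems step_consistent x by (auto simp: step_def)
  qed
qed simp

lemma independent_partitionD:
  assumes "independent_partition G Ag Ag1 Ag2"
  shows "Ag1 \<subseteq> Ag" "Ag2 \<subseteq> Ag" "\<Union>Ag = \<Union>Ag1 \<union> \<Union>Ag2" "\<Union>Ag1 \<inter> \<Union>Ag2 = {}"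
    "Ag = Ag1 \<union> Ag2"
  using assms unfolding independent_partition_def by auto

lemma consistent_subset: "consistent G T \<Longrightarrow> S \<subseteq> T \<Longrightarrow> consistent G S"
  by (auto simp: consistent_def)

lemma consistent_extends_to_JS:
  assumes "consistent G S" "S \<subseteq> \<Union>A"
  obtains J where "J \<in> JS G A" "S \<subseteq> J"
proof -
  obtain v where v: "holds v G" "\<forall>\<phi>\<in>S. holds v \<phi>" using assms(1) by (auto simp: consistent_def)
  let ?J = "{\<phi> \<in> \<Union>A. holds v \<phi>}"
  have "?J \<in> JS G A" unfolding JS_def complete_def consistent_def using v by auto
  moreover have "S \<subseteq> ?J" using v assms(2) by auto
  ultimately show thesis by (rule that)
qed

lemma independent_partition_separable:
  assumes ip: "independent_partition G Ag Ag1 Ag2"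
  shows "separable_constraint (consistent G) (\<Union>Ag1) (\<Union>Ag2)"
proof
  show "\<Union>Ag1 \<inter> \<Union>Ag2 = {}" by (rule independent_partitionD(4)[OF ip])
  fix S assume S: "S \<subseteq> \<Union>Ag1 \<union> \<Union>Ag2"
  show "consistent G S \<longleftrightarrow> consistent G (S \<inter> \<Union>Ag1) \<and> consistent G (S \<inter> \<Union>Ag2)"
  proof
    assume "consistent G S"
    then show "consistent G (S \<inter> \<Union>Ag1) \<and> consistent G (S \<inter> \<Union>Ag2)"
      using consistent_subset[OF _ Int_lower1] by blast
  next
    assume "consistent G (S \<inter> \<Union>Ag1) \<and> consistent G (S \<inter> \<Union>Ag2)"
    then have c1: "consistent G (S \<inter> \<Union>Ag1)" and c2: "consistent G (S \<inter> \<Union>Ag2)" by blast+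
    obtain J1 where J1: "J1 \<in> JS G Ag1" "S \<inter> \<Union>Ag1 \<subseteq> J1"
      by (rule consistent_extends_to_JS[OF c1 Int_lower2])
    obtain J2 where J2: "J2 \<in> JS G Ag2" "S \<inter> \<Union>Ag2 \<subseteq> J2"
      by (rule consistent_extends_to_JS[OF c2 Int_lower2])
    have "consistent G (J1 \<union> J2)" using ip J1(1) J2(1) by (simp add: independent_partition_def)
    moreover have "S \<subseteq> J1 \<union> J2" using S J1(2) J2(2) by blast
    ultimately show "consistent G S" by (rule consistent_subset)
  qed
qed

lemma independent_partition_swap:
  assumes "independent_partition G Ag Ag1 Ag2"
  shows "independent_partition G Ag Ag2 Ag1"
proof -
  have "consistent G (J2 \<union> J1)" if "J2 \<in> JS G Ag2" "J1 \<in> JS G Ag1" for J1 J2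
    using assms that unfolding independent_partition_def by (metis Un_commute)
  moreover note parts = independent_partitionD[OF assms]
  moreover have "Ag1 \<noteq> {}" "Ag2 \<noteq> {}" using assms by (simp_all add: independent_partition_def)
  ultimately show ?thesis unfolding independent_partition_def
    by (simp add: Un_commute Int_commute)
qed

lemma JS_restrict: "J \<in> JS G Ag \<Longrightarrow> A \<subseteq> Ag \<Longrightarrow> J \<inter> \<Union>A \<in> JS G A"
  unfolding JS_def complete_def by (auto intro: consistent_subset)

lemma JS_subset_Pow: "JS G A \<subseteq> Pow (\<Union>A)"
  by (auto simp: JS_def)

lemma JS_independent_partition:
  assumes ip: "independent_partition G Ag Ag1 Ag2"
  shows "JS G Ag = pair_unions (JS G Ag1) (JS G Ag2)"
proof (rule set_eqI)
  fix J
  note parts = independent_partitionD[OF ip]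
  show "J \<in> JS G Ag \<longleftrightarrow> J \<in> pair_unions (JS G Ag1) (JS G Ag2)"
    unfolding mem_pair_unions_iff[OF parts(4) JS_subset_Pow JS_subset_Pow]
  proof (intro iffI conjI)
    assume J: "J \<in> JS G Ag"
    show "J \<subseteq> \<Union>Ag1 \<union> \<Union>Ag2" using J parts(3) by (simp add: JS_def)
    show "J \<inter> \<Union>Ag1 \<in> JS G Ag1" by (rule JS_restrict[OF J parts(1)])
    show "J \<inter> \<Union>Ag2 \<in> JS G Ag2" by (rule JS_restrict[OF J parts(2)])
  next
    assume "J \<subseteq> \<Union>Ag1 \<union> \<Union>Ag2 \<and> J \<inter> \<Union>Ag1 \<in> JS G Ag1 \<and> J \<inter> \<Union>Ag2 \<in> JS G Ag2"
    then have J: "J \<subseteq> \<Union>Ag1 \<union> \<Union>Ag2" and J1: "J \<inter> \<Union>Ag1 \<in> JS G Ag1"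
      and J2: "J \<inter> \<Union>Ag2 \<in> JS G Ag2" by blast+
    have "consistent G J"
      using separable_constraint.split[OF independent_partition_separable[OF ip] J] J1 J2
      by (simp add: JS_def)
    moreover have "complete Ag J"
      using J1 J2 parts(5) unfolding JS_def complete_def by blast
    ultimately show "J \<in> JS G Ag" using J parts(3) by (simp add: JS_def)
  qed
qed

text \<open>MC, MCC and FULL_H all select the complete consistent judgment sets extending some member of a
  family of witness sets, so their separability reduces to that of the witness families.\<close>

definition extensions :: "'v form \<Rightarrow> 'v form set set \<Rightarrow> 'v form set set \<Rightarrow> 'v form set set" where
  "extensions G Ag W = {J \<in> JS G Ag. \<exists>S\<in>W. S \<subseteq> J}"

lemma extensions_pair_unions:
  assumes ip: "independent_partition G Ag Ag1 Ag2"
    and W1: "W1 \<subseteq> Pow (\<Union>Ag1)" and W2: "W2 \<subseteq> Pow (\<Union>Ag2)"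
  shows "extensions G Ag (pair_unions W1 W2) =
    pair_unions (extensions G Ag1 W1) (extensions G Ag2 W2)"
proof (rule set_eqI)
  fix J
  note parts = independent_partitionD[OF ip]
  have fam: "extensions G Ag1 W1 \<subseteq> Pow (\<Union>Ag1)" "extensions G Ag2 W2 \<subseteq> Pow (\<Union>Ag2)"
    by (auto simp: extensions_def JS_def)
  have JS_iff: "J \<in> JS G Ag \<longleftrightarrow>
      J \<subseteq> \<Union>Ag1 \<union> \<Union>Ag2 \<and> J \<inter> \<Union>Ag1 \<in> JS G Ag1 \<and> J \<inter> \<Union>Ag2 \<in> JS G Ag2"
    unfolding JS_independent_partition[OF ip]
    by (rule mem_pair_unions_iff[OF parts(4) JS_subset_Pow JS_subset_Pow])
  show "J \<in> extensions G Ag (pair_unions W1 W2) \<longleftrightarrow>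
      J \<in> pair_unions (extensions G Ag1 W1) (extensions G Ag2 W2)"
    unfolding mem_pair_unions_iff[OF parts(4) fam]
    using JS_iff ex_subset_pair_unions_iff[OF W1 W2, of J] by (simp add: extensions_def conj_ac)
qed

section \<open>Profiles, majorities and distances\<close>

lemma profiles_restrict: "Q \<in> profiles G Ag n \<Longrightarrow> A \<subseteq> Ag \<Longrightarrow> restr Q A \<in> profiles G A n"
  unfolding profiles_def restr_def by (auto intro: JS_restrict)

lemma restr_map2_union:
  assumes "length Q1 = length Q2" "\<forall>J\<in>set Q1. J \<subseteq> \<Union>A" "\<forall>J\<in>set Q2. J \<inter> \<Union>A = {}"
  shows "restr (map2 (\<union>) Q1 Q2) A = Q1"
  using assms by (induction Q1 Q2 rule: list_induct2) (auto simp: restr_def)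

lemma profiles_join:
  assumes ip: "independent_partition G Ag Ag1 Ag2"
    and Q1: "Q1 \<in> profiles G Ag1 n" and Q2: "Q2 \<in> profiles G Ag2 n"
  shows "map2 (\<union>) Q1 Q2 \<in> profiles G Ag n"
    and "restr (map2 (\<union>) Q1 Q2) Ag1 = Q1" and "restr (map2 (\<union>) Q1 Q2) Ag2 = Q2"
proof -
  note parts = independent_partitionD[OF ip]
  have len: "length Q1 = n" "length Q2 = n" using Q1 Q2 by (simp_all add: profiles_def)
  have JS1: "set Q1 \<subseteq> JS G Ag1" and JS2: "set Q2 \<subseteq> JS G Ag2"
    using Q1 Q2 by (simp_all add: profiles_def)
  have sub1: "\<forall>J\<in>set Q1. J \<subseteq> \<Union>Ag1" and sub2: "\<forall>J\<in>set Q2. J \<subseteq> \<Union>Ag2"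
    using JS1 JS2 by (auto simp: JS_def)
  have "\<forall>J\<in>set Q2. J \<inter> \<Union>Ag1 = {}" using sub2 parts(4) by auto
  with len sub1 show "restr (map2 (\<union>) Q1 Q2) Ag1 = Q1" by (intro restr_map2_union) simp_all
  have "length Q1 = length Q2" using len by simp
  then have "map2 (\<union>) Q1 Q2 = map2 (\<union>) Q2 Q1"
    by (induction Q1 Q2 rule: list_induct2) auto
  moreover have "\<forall>J\<in>set Q1. J \<inter> \<Union>Ag2 = {}" using sub1 parts(4) by auto
  ultimately show "restr (map2 (\<union>) Q1 Q2) Ag2 = Q2"
    using len sub2 by (simp add: restr_map2_union)
  have "J1 \<union> J2 \<in> JS G Ag" if "J1 \<in> set Q1" "J2 \<in> set Q2" for J1 J2
    using that JS1 JS2 unfolding JS_independent_partition[OF ip] pair_unions_def by auto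
  then have "set (map2 (\<union>) Q1 Q2) \<subseteq> JS G Ag"
    by (auto dest: set_zip_leftD set_zip_rightD)
  then show "map2 (\<union>) Q1 Q2 \<in> profiles G Ag n" using len by (simp add: profiles_def)
qed

lemma length_restr [simp]: "length (restr P A) = length P"
  by (simp add: restr_def)

lemma support_restr: "\<phi> \<in> \<Union>A \<Longrightarrow> support (restr P A) \<phi> = support P \<phi>"
  unfolding support_def restr_def by (simp add: filter_map o_def)

lemma maj_subset: "maj A Q \<subseteq> \<Union>A"
  by (auto simp: maj_def)

lemma maj_restr:
  assumes "A \<subseteq> Ag"
  shows "maj A (restr P A) = maj Ag P \<inter> \<Union>A"
proof (rule set_eqI)
  fix \<phi>
  show "\<phi> \<in> maj A (restr P A) \<longleftrightarrow> \<phi> \<in> maj Ag P \<inter> \<Union>A"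
  proof (cases "\<phi> \<in> \<Union>A")
    case True
    moreover have "\<phi> \<in> \<Union>Ag" by (rule subsetD[OF Union_mono[OF assms] True])
    ultimately show ?thesis by (simp add: maj_def support_restr)
  qed (simp add: maj_def)
qed

lemma maj_split:
  assumes "independent_partition G Ag Ag1 Ag2"
  shows "maj Ag Q = maj Ag1 (restr Q Ag1) \<union> maj Ag2 (restr Q Ag2)"
  using independent_partitionD(1-4)[OF assms] maj_subset[of Ag Q] by (auto simp: maj_restr)

lemma consistent_maj_split:
  assumes ip: "independent_partition G Ag Ag1 Ag2"
  shows "consistent G (maj Ag Q) \<longleftrightarrow>
    consistent G (maj Ag1 (restr Q Ag1)) \<and> consistent G (maj Ag2 (restr Q Ag2))"
  using separable_constraint.split[OF independent_partition_separable[OF ip], of "maj Ag Q"]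
    independent_partitionD(1-4)[OF ip] maj_subset[of Ag Q] by (simp add: maj_restr)

lemma DH_split:
  assumes "X1 \<inter> X2 = {}" "\<forall>J\<in>set P. finite J \<and> J \<subseteq> X1 \<union> X2" "length P = length Q"
  shows "DH P Q = DH (map (\<lambda>J. J \<inter> X1) P) (map (\<lambda>J. J \<inter> X1) Q) +
    DH (map (\<lambda>J. J \<inter> X2) P) (map (\<lambda>J. J \<inter> X2) Q)"
  using assms(3,2)
proof (induction P Q rule: list_induct2)
  case (Cons J P J' Q)
  have "J - J' \<subseteq> X1 \<union> X2" "finite (J - J')" using Cons.prems by auto
  then have "card (J - J') = card ((J - J') \<inter> X1) + card ((J - J') \<inter> X2)"
    using card_Int_split[OF _ _ assms(1)] by blast
  moreover have "(J - J') \<inter> X1 = J \<inter> X1 - J' \<inter> X1" "(J - J') \<inter> X2 = J \<inter> X2 - J' \<inter> X2"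
    by blast+
  ultimately have "dH J J' = dH (J \<inter> X1) (J' \<inter> X1) + dH (J \<inter> X2) (J' \<inter> X2)"
    by (simp add: dH_def)
  then show ?case using Cons by (simp add: DH_def)
qed (simp add: DH_def)

lemma DH_independent_partition:
  assumes ip: "independent_partition G Ag Ag1 Ag2" and fin: "finite (\<Union>Ag)"
    and P: "P \<in> profiles G Ag n" and "length Q = n"
  shows "DH P Q = DH (restr P Ag1) (restr Q Ag1) + DH (restr P Ag2) (restr Q Ag2)"
proof -
  note parts = independent_partitionD[OF ip]
  have "\<forall>J\<in>set P. J \<subseteq> \<Union>Ag" using P by (auto simp: profiles_def JS_def)
  then have "\<forall>J\<in>set P. finite J \<and> J \<subseteq> \<Union>Ag1 \<union> \<Union>Ag2"
    using finite_subset[OF _ fin] parts(3) by auto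
  then show ?thesis
    using DH_split[OF parts(4)] P assms(4) by (simp add: restr_def profiles_def)
qed

lemma MC_eq_extensions: "MC G Ag P = extensions G Ag (maximal_subsets (consistent G) (maj Ag P))"
  by (auto simp: MC_def extensions_def maximal_subsets_def)

lemma MCC_eq_extensions: "MCC G Ag P = extensions G Ag (max_card_subsets (consistent G) (maj Ag P))"
  by (auto simp: MCC_def extensions_def max_card_subsets_def)

lemma MC_separable:
  assumes ip: "independent_partition G Ag Ag1 Ag2"
  shows "MC G Ag P = pair_unions (MC G Ag1 (restr P Ag1)) (MC G Ag2 (restr P Ag2))"
proof -
  interpret separable_constraint "consistent G" "\<Union>Ag1" "\<Union>Ag2"
    by (rule independent_partition_separable[OF ip])
  have "maximal_subsets (consistent G) (maj A Q) \<subseteq> Pow (\<Union>A)" for A Q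
    using maximal_subsetsD(1) maj_subset by blast
  then show ?thesis
    unfolding MC_eq_extensions maj_split[OF ip, of P]
    by (simp add: maximal_subsets_union[OF maj_subset maj_subset] extensions_pair_unions[OF ip])
qed

lemma MCC_separable:
  assumes ip: "independent_partition G Ag Ag1 Ag2" and fin: "finite (\<Union>Ag)"
  shows "MCC G Ag P = pair_unions (MCC G Ag1 (restr P Ag1)) (MCC G Ag2 (restr P Ag2))"
proof -
  interpret separable_constraint "consistent G" "\<Union>Ag1" "\<Union>Ag2"
    by (rule independent_partition_separable[OF ip])
  have "finite (maj Ag P)" using fin maj_subset finite_subset by blast
  then have "finite (maj Ag1 (restr P Ag1) \<union> maj Ag2 (restr P Ag2))"
    by (simp add: maj_split[OF ip, symmetric])
  moreover have "max_card_subsets (consistent G) (maj A Q) \<subseteq> Pow (\<Union>A)" for A Q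
    using max_card_subsetsD(1) maj_subset by blast
  ultimately show ?thesis
    unfolding MCC_eq_extensions maj_split[OF ip, of P]
    by (simp add: max_card_subsets_union[OF maj_subset maj_subset] extensions_pair_unions[OF ip])
qed

lemma RA_eq_image: "RA G Ag P = (\<lambda>xs. greedy G xs {}) ` rankings (support P) (\<Union>Ag)"
  by (auto simp: RA_def rankings_def)

lemma RA_separable:
  assumes ip: "independent_partition G Ag Ag1 Ag2" and "consistent G {}"
  shows "RA G Ag P = pair_unions (RA G Ag1 (restr P Ag1)) (RA G Ag2 (restr P Ag2))"
proof -
  note parts = independent_partitionD[OF ip]
  let ?g = "\<lambda>xs. greedy G xs {}" and ?X1 = "\<Union>Ag1" and ?X2 = "\<Union>Ag2"
  have rk: "rankings (support (restr P Ag1)) ?X1 = rankings (support P) ?X1"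
    "rankings (support (restr P Ag2)) ?X2 = rankings (support P) ?X2"
    by (rule rankings_cong, erule support_restr)+
  have g_split: "?g xs = ?g (filter (\<lambda>x. x \<in> ?X1) xs) \<union> ?g (filter (\<lambda>x. x \<in> ?X2) xs)"
    if "xs \<in> rankings (support P) (?X1 \<union> ?X2)" for xs
    using greedy_split[OF independent_partition_separable[OF ip], of xs "{}" "{}"] that assms(2)
    by (simp add: rankings_def)
  have "?g ` rankings (support P) (?X1 \<union> ?X2) =
      pair_unions (?g ` rankings (support P) ?X1) (?g ` rankings (support P) ?X2)"
  proof (intro equalityI subsetI)
    fix J assume "J \<in> ?g ` rankings (support P) (?X1 \<union> ?X2)"
    then obtain xs where xs: "xs \<in> rankings (support P) (?X1 \<union> ?X2)" and J: "J = ?g xs" by blast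
    have "filter (\<lambda>x. x \<in> ?X1) xs \<in> rankings (support P) ?X1"
      "filter (\<lambda>x. x \<in> ?X2) xs \<in> rankings (support P) ?X2"
      using filter_in_rankings[OF xs, of ?X1] filter_in_rankings[OF xs, of ?X2] by simp_all
    then show "J \<in> pair_unions (?g ` rankings (support P) ?X1) (?g ` rankings (support P) ?X2)"
      unfolding J g_split[OF xs] by (intro pair_unionsI imageI)
  next
    fix J assume "J \<in> pair_unions (?g ` rankings (support P) ?X1) (?g ` rankings (support P) ?X2)"
    then obtain xs1 xs2 where xs: "xs1 \<in> rankings (support P) ?X1" "xs2 \<in> rankings (support P) ?X2"
      and J: "J = ?g xs1 \<union> ?g xs2"
      by (elim pair_unionsE imageE) blast
    obtain xs where xs_rk: "xs \<in> rankings (support P) (?X1 \<union> ?X2)"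
      and "filter (\<lambda>x. x \<in> ?X1) xs = xs1" "filter (\<lambda>x. x \<in> ?X2) xs = xs2"
      by (rule rankings_merge[OF xs parts(4)])
    then have "J = ?g xs" using g_split[OF xs_rk] J by simp
    then show "J \<in> ?g ` rankings (support P) (?X1 \<union> ?X2)" using xs_rk by (rule image_eqI)
  qed
  then show ?thesis unfolding RA_eq_image rk parts(3) .
qed

definition closest_majority_consistent ::
  "'v form \<Rightarrow> 'v form set set \<Rightarrow> 'v form set list \<Rightarrow> 'v form set list set" where
  "closest_majority_consistent G Ag P =
    {Q \<in> profiles G Ag (length P). consistent G (maj Ag Q) \<and>
      (\<forall>Q' \<in> profiles G Ag (length P). consistent G (maj Ag Q') \<longrightarrow> DH P Q \<le> DH P Q')}"

lemma FULL_H_eq_extensions: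
  "FULL_H G Ag P = extensions G Ag (maj Ag ` closest_majority_consistent G Ag P)"
  by (auto simp: FULL_H_def extensions_def closest_majority_consistent_def)

lemma closest_majority_consistentI:
  assumes "Q \<in> profiles G Ag (length P)" "consistent G (maj Ag Q)"
    and "\<And>Q'. Q' \<in> profiles G Ag (length P) \<Longrightarrow> consistent G (maj Ag Q') \<Longrightarrow> DH P Q \<le> DH P Q'"
  shows "Q \<in> closest_majority_consistent G Ag P"
  using assms by (simp add: closest_majority_consistent_def)

lemma closest_majority_consistentD:
  assumes "Q \<in> closest_majority_consistent G Ag P"
  shows "Q \<in> profiles G Ag (length P)" "consistent G (maj Ag Q)"
    and "Q' \<in> profiles G Ag (length P) \<Longrightarrow> consistent G (maj Ag Q') \<Longrightarrow> DH P Q \<le> DH P Q'"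
  using assms by (simp_all add: closest_majority_consistent_def)

lemma closest_majority_consistent_restrict:
  assumes ip: "independent_partition G Ag Ag1 Ag2" and fin: "finite (\<Union>Ag)"
    and P: "P \<in> profiles G Ag n" and Q: "Q \<in> closest_majority_consistent G Ag P"
  shows "restr Q Ag1 \<in> closest_majority_consistent G Ag1 (restr P Ag1)"
proof -
  note parts = independent_partitionD[OF ip]
  have len: "length P = n" using P by (simp add: profiles_def)
  note Qp = closest_majority_consistentD(1)[OF Q, unfolded len]
    and Qc = closest_majority_consistentD(2)[OF Q]
    and Qmin = closest_majority_consistentD(3)[OF Q, unfolded len]
  let ?Q2 = "restr Q Ag2"
  have Q2: "?Q2 \<in> profiles G Ag2 n" "consistent G (maj Ag2 ?Q2)"
    using profiles_restrict[OF Qp parts(2)] Qc consistent_maj_split[OF ip, of Q] by simp_all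
  \<comment> \<open>replace the first component of Q by a competitor and keep the second\<close>
  have "DH (restr P Ag1) (restr Q Ag1) \<le> DH (restr P Ag1) Q1'"
    if Q1': "Q1' \<in> profiles G Ag1 n" "consistent G (maj Ag1 Q1')" for Q1'
  proof -
    let ?Q' = "map2 (\<union>) Q1' ?Q2"
    note Q' = profiles_join[OF ip Q1'(1) Q2(1)]
    have "consistent G (maj Ag ?Q')"
      using consistent_maj_split[OF ip, of ?Q'] Q'(2,3) Q1'(2) Q2(2) by simp
    then have "DH P Q \<le> DH P ?Q'" by (rule Qmin[OF Q'(1)])
    moreover have "length Q = n" "length ?Q' = n" using Qp Q'(1) by (simp_all add: profiles_def)
    ultimately show ?thesis using DH_independent_partition[OF ip fin P] Q'(2,3) by simp
  qed
  moreover have "restr Q Ag1 \<in> profiles G Ag1 n" by (rule profiles_restrict[OF Qp parts(1)])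
  moreover have "consistent G (maj Ag1 (restr Q Ag1))"
    using consistent_maj_split[OF ip, of Q] Qc by simp
  ultimately show ?thesis by (intro closest_majority_consistentI) (simp_all add: len)
qed

lemma closest_majority_consistent_join:
  assumes ip: "independent_partition G Ag Ag1 Ag2" and fin: "finite (\<Union>Ag)"
    and P: "P \<in> profiles G Ag n" and Qp: "Q \<in> profiles G Ag n"
    and Q1: "restr Q Ag1 \<in> closest_majority_consistent G Ag1 (restr P Ag1)"
    and Q2: "restr Q Ag2 \<in> closest_majority_consistent G Ag2 (restr P Ag2)"
  shows "Q \<in> closest_majority_consistent G Ag P"
proof (rule closest_majority_consistentI)
  note parts = independent_partitionD[OF ip]
  have len: "length P = n" "length Q = n" using P Qp by (simp_all add: profiles_def)
  show "Q \<in> profiles G Ag (length P)" using Qp len by simp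
  show "consistent G (maj Ag Q)"
    using consistent_maj_split[OF ip, of Q] closest_majority_consistentD(2)[OF Q1]
      closest_majority_consistentD(2)[OF Q2] by simp
  fix Q' assume Q': "Q' \<in> profiles G Ag (length P)" "consistent G (maj Ag Q')"
  have Q'c: "consistent G (maj Ag1 (restr Q' Ag1))" "consistent G (maj Ag2 (restr Q' Ag2))"
    using consistent_maj_split[OF ip, of Q'] Q'(2) by simp_all
  have "DH (restr P Ag1) (restr Q Ag1) \<le> DH (restr P Ag1) (restr Q' Ag1)"
    using closest_majority_consistentD(3)[OF Q1 _ Q'c(1)] profiles_restrict[OF Q'(1) parts(1)] by simp
  moreover have "DH (restr P Ag2) (restr Q Ag2) \<le> DH (restr P Ag2) (restr Q' Ag2)"
    using closest_majority_consistentD(3)[OF Q2 _ Q'c(2)] profiles_restrict[OF Q'(1) parts(2)] by simp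
  moreover have "length Q' = n" using Q'(1) len by (simp add: profiles_def)
  ultimately show "DH P Q \<le> DH P Q'" using DH_independent_partition[OF ip fin P] len by simp
qed

lemma FULL_H_separable:
  assumes ip: "independent_partition G Ag Ag1 Ag2" and fin: "finite (\<Union>Ag)"
    and P: "P \<in> profiles G Ag n"
  shows "FULL_H G Ag P = pair_unions (FULL_H G Ag1 (restr P Ag1)) (FULL_H G Ag2 (restr P Ag2))"
proof -
  let ?C = "closest_majority_consistent G" and ?P1 = "restr P Ag1" and ?P2 = "restr P Ag2"
  have len: "length P = n" using P by (simp add: profiles_def)
  have "maj Ag ` ?C Ag P = pair_unions (maj Ag1 ` ?C Ag1 ?P1) (maj Ag2 ` ?C Ag2 ?P2)"
  proof (intro equalityI subsetI)
    fix S assume "S \<in> maj Ag ` ?C Ag P"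
    then obtain Q where Q: "Q \<in> ?C Ag P" and S: "S = maj Ag Q" by blast
    have "restr Q Ag1 \<in> ?C Ag1 ?P1" "restr Q Ag2 \<in> ?C Ag2 ?P2"
      using closest_majority_consistent_restrict[OF ip fin P Q]
        closest_majority_consistent_restrict[OF independent_partition_swap[OF ip] fin P Q] .
    then show "S \<in> pair_unions (maj Ag1 ` ?C Ag1 ?P1) (maj Ag2 ` ?C Ag2 ?P2)"
      unfolding S maj_split[OF ip, of Q] by (intro pair_unionsI imageI)
  next
    fix S assume "S \<in> pair_unions (maj Ag1 ` ?C Ag1 ?P1) (maj Ag2 ` ?C Ag2 ?P2)"
    then obtain Q1 Q2 where Q: "Q1 \<in> ?C Ag1 ?P1" "Q2 \<in> ?C Ag2 ?P2"
      and S: "S = maj Ag1 Q1 \<union> maj Ag2 Q2"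
      by (elim pair_unionsE imageE) blast
    have "Q1 \<in> profiles G Ag1 n" "Q2 \<in> profiles G Ag2 n"
      using closest_majority_consistentD(1)[OF Q(1)] closest_majority_consistentD(1)[OF Q(2)] len
      by simp_all
    note Q12 = profiles_join[OF ip this]
    have "map2 (\<union>) Q1 Q2 \<in> ?C Ag P"
      using closest_majority_consistent_join[OF ip fin P Q12(1)] Q Q12(2,3) by simp
    moreover have "S = maj Ag (map2 (\<union>) Q1 Q2)" using S maj_split[OF ip] Q12(2,3) by simp
    ultimately show "S \<in> maj Ag ` ?C Ag P" by (rule rev_image_eqI)
  qed
  moreover have "maj A ` ?C A P' \<subseteq> Pow (\<Union>A)" for A P' using maj_subset by auto
  ultimately show ?thesis
    unfolding FULL_H_eq_extensions by (simp add: extensions_pair_unions[OF ip])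
qed

lemma agenda_finite_formulas: "agenda Ag \<Longrightarrow> finite (\<Union>Ag)"
  by (auto simp: agenda_def issue_def)

theorem proposition3:
  fixes \<Gamma> :: "'v form" and n :: nat
    and Ag Ag1 Ag2 :: "'v form set set" and P :: "'v form set list"
  assumes "consistent \<Gamma> {}"
    and "n \<ge> 1"
    and "agenda Ag"
    and "independent_partition \<Gamma> Ag Ag1 Ag2"
    and "P \<in> profiles \<Gamma> Ag n"
  shows "\<forall>R \<in> {MC, MCC, RA, FULL_H}.
           R \<Gamma> Ag P = {J1 \<union> J2 | J1 J2. J1 \<in> R \<Gamma> Ag1 (restr P Ag1) \<and> J2 \<in> R \<Gamma> Ag2 (restr P Ag2)}"
proof -
  have fin: "finite (\<Union>Ag)" by (rule agenda_finite_formulas[OF assms(3)])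
  show ?thesis
    using MC_separable[OF assms(4), of P] MCC_separable[OF assms(4) fin, of P]
      RA_separable[OF assms(4,1), of P] FULL_H_separable[OF assms(4) fin assms(5)]
    by (simp add: pair_unions_def)
qed

end
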